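(* Let $\{\omega_m\}$ be a sequence of positive real numbers with $\omega_m\to\infty$, and let $z_m=a_m-\mathrm{i}b_m$ with $a_m,b_m\geq 0$. Suppose there exist constants $c_1, c_2>0$ such that $b_m\geq c_1 \omega_m$ and $b_m\geq c_2 a_m$ for all $m$. Then for all sufficiently large $m$, $z=z_m$ satisfies neither of the equations \[ \frac{\omega_m-z}{\omega_m+z}= e^{-\mathrm{i}z},\qquad \frac{\omega_m-z}{\omega_m+z}= -e^{-\mathrm{i}z}. \] *)

theory Defs
  imports "HOL-Analysis.Analysis"
begin

end

theory Submission
  imports Defs
begin

text \<open>Both \<open>\<omega> m\<close> and \<open>a m\<close> are at most a constant multiple \<open>C\<close> of \<open>b m\<close>, so
  \<open>|\<omega> m + z m| \<le> sqrt (C\<^sup>2 + 1) * |\<omega> m - z m|\<close> and the left-hand side has modulus at least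
  \<open>1 / sqrt (C\<^sup>2 + 1)\<close>. Both right-hand sides have modulus \<open>exp (- b m)\<close>, which tends to 0
  because \<open>b m \<ge> c1 * \<omega> m \<longrightarrow> \<infinity>\<close>.\<close>

lemma norm_exp_minus_ii_Complex: "cmod (exp (- \<i> * Complex a (- b))) = exp (- b)"
  by (simp add: norm_exp_eq_Re)

lemma norm_add_le_sqrt_norm_diff:
  fixes w a b C :: real
  assumes "0 \<le> w + a" and "w + a \<le> C * b"
  shows "cmod (of_real w + Complex a (- b)) \<le> sqrt (C\<^sup>2 + 1) * cmod (of_real w - Complex a (- b))"
proof -
  have "(w + a)\<^sup>2 \<le> (C * b)\<^sup>2"
    using assms by (intro power_mono) auto
  moreover have "0 \<le> (C\<^sup>2 + 1) * (w - a)\<^sup>2"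
    by simp
  moreover have "(C\<^sup>2 + 1) * ((w - a)\<^sup>2 + b\<^sup>2) = (C * b)\<^sup>2 + b\<^sup>2 + (C\<^sup>2 + 1) * (w - a)\<^sup>2"
    by (simp add: algebra_simps power_mult_distrib)
  ultimately have "(w + a)\<^sup>2 + b\<^sup>2 \<le> (C\<^sup>2 + 1) * ((w - a)\<^sup>2 + b\<^sup>2)"
    by linarith
  then have "sqrt ((w + a)\<^sup>2 + b\<^sup>2) \<le> sqrt (C\<^sup>2 + 1) * sqrt ((w - a)\<^sup>2 + b\<^sup>2)"
    by (metis real_sqrt_le_mono real_sqrt_mult)
  then show ?thesis
    by (simp add: cmod_def)
qed

lemma norm_divide_ge_inverse_sqrt:
  fixes w a b C :: real
  assumes "0 \<le> w + a" and "w + a \<le> C * b" and "b \<noteq> 0"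
  shows "inverse (sqrt (C\<^sup>2 + 1)) \<le> cmod ((of_real w - Complex a (- b)) / (of_real w + Complex a (- b)))"
proof -
  have "cmod (of_real w + Complex a (- b)) > 0"
    using \<open>b \<noteq> 0\<close> by (simp add: complex_eq_iff)
  moreover have "sqrt (C\<^sup>2 + 1) > 0"
    by (simp add: add_nonneg_pos)
  ultimately show ?thesis
    using norm_add_le_sqrt_norm_diff[OF assms(1,2)]
    by (simp add: norm_divide field_simps)
qed

theorem lemma5p2:
  fixes \<omega> a b :: "nat \<Rightarrow> real" and z :: "nat \<Rightarrow> complex" and c1 c2 :: real
  assumes "\<And>m. \<omega> m > 0"
    and "filterlim \<omega> at_top sequentially"
    and "\<And>m. z m = Complex (a m) (- b m)"
    and "\<And>m. a m \<ge> 0" and "\<And>m. b m \<ge> 0"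
    and "c1 > 0" and "c2 > 0"
    and "\<And>m. b m \<ge> c1 * \<omega> m" and "\<And>m. b m \<ge> c2 * a m"
  shows "\<forall>\<^sub>F m in sequentially.
           (of_real (\<omega> m) - z m) / (of_real (\<omega> m) + z m) \<noteq> exp (- \<i> * z m) \<and>
           (of_real (\<omega> m) - z m) / (of_real (\<omega> m) + z m) \<noteq> - exp (- \<i> * z m)"
proof -
  define C where "C = 1 / c1 + 1 / c2"
  have "filterlim (\<lambda>m. c1 * \<omega> m) at_top sequentially"
    using assms(2,6) by (intro filterlim_tendsto_pos_mult_at_top tendsto_const) auto
  then have "filterlim b at_top sequentially"
    using assms(8) by (auto intro: filterlim_at_top_mono)
  then have "\<forall>\<^sub>F m in sequentially. b m > ln (sqrt (C\<^sup>2 + 1))"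
    by (simp add: filterlim_at_top_dense)
  then show ?thesis
  proof (rule eventually_mono)
    fix m assume b_large: "b m > ln (sqrt (C\<^sup>2 + 1))"
    moreover have "ln (sqrt (C\<^sup>2 + 1)) \<ge> 0"
      by simp
    ultimately have b_pos: "b m > 0"
      by linarith
    let ?q = "(of_real (\<omega> m) - z m) / (of_real (\<omega> m) + z m)"
    have "\<omega> m \<le> b m / c1" and "a m \<le> b m / c2"
      using assms(6,7) assms(8,9)[of m] by (simp_all add: field_simps mult.commute)
    then have "\<omega> m + a m \<le> C * b m"
      by (simp add: C_def algebra_simps)
    moreover have "0 \<le> \<omega> m + a m" and "b m \<noteq> 0"
      using assms(1,4)[of m] b_pos by auto
    ultimately have "inverse (sqrt (C\<^sup>2 + 1)) \<le> cmod ?q"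
      unfolding assms(3) by (intro norm_divide_ge_inverse_sqrt)
    moreover have "cmod (exp (- \<i> * z m)) < exp (- ln (sqrt (C\<^sup>2 + 1)))"
      using b_large by (simp add: assms(3) norm_exp_minus_ii_Complex)
    moreover have "exp (- ln (sqrt (C\<^sup>2 + 1))) = inverse (sqrt (C\<^sup>2 + 1))"
      by (simp add: exp_minus add_nonneg_pos)
    ultimately show "?q \<noteq> exp (- \<i> * z m) \<and> ?q \<noteq> - exp (- \<i> * z m)"
      by (metis not_less norm_minus_cancel)
  qed
qed

end
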